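(* Let $\epsilon>0$, $0<\delta<1$, positive integers $m\le n$, and $\sigma_1^2,\dots,\sigma_n^2>0$. Consider the weighted naive elimination algorithm: with $\omega_i=\delta\,\sigma_i^2/\sum_{j=1}^n\sigma_j^2$, it pulls each arm $i\in[n]$ exactly $\frac{2\sigma_i^2}{(\epsilon/2)^2}\ln\frac1{\omega_i}$ times, computes the sample mean $\hat\mu_i$ of each arm, and returns the $m$ arms with the largest sample means. This algorithm uses \[ 8\sum_{i\in[n]}\frac{\sigma_i^2}{\epsilon^2}\Big(\ln\frac1\delta+\mathrm{Ent}(\sigma^2_{1:n})\Big) \] samples, and it solves the $(\epsilon,\delta)$ top-$m$ arm identification problem.
   Context: Bandit setting: $n$ arms; pulling arm $i$ returns an independent sample from a distribution with unknown mean $\mu_i$ that is $\sigma_i^2$-sub-Gaussian ($\ln\mathbb E[e^{\lambda(X-\mu_i)}]\le\sigma_i^2\lambda^2/2$ for all real $\lambda$), $\sigma_i^2$ known. $\max^m_{i\in S}\mu_i$ denotes the $m$-th largest mean in $S$. An arm is $\epsilon$-approximate top-$m$ if its mean is at least $\max^m_{i\in[n]}\mu_i-\epsilon$. An algorithm solves the $(\epsilon,\delta)$ top-$m$ arm identification problem if for every such instance, with probability at least $1-\delta$, all $m$ returned arms are $\epsilon$-approximate top-$m$. $\mathrm{Ent}(a)=-\sum_i\hat a_i\ln\hat a_i$ with $\hat a_i=a_i/\sum_ja_j$ for a positive vector $a$. *)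

theory Defs
  imports "HOL-Probability.Probability"
begin

text \<open>Arms are indexed by 0,...,n-1. Variances sigma_i^2 are given as a function sig2.\<close>

definition subgaussian :: "real measure \<Rightarrow> real \<Rightarrow> real \<Rightarrow> bool" where
  "subgaussian D mu s2 \<longleftrightarrow>
     (\<forall>l::real. integrable D (\<lambda>x. exp (l * (x - mu))) \<and>
        ln (\<integral>x. exp (l * (x - mu)) \<partial>D) \<le> s2 * l\<^sup>2 / 2)"

definition mth_largest :: "nat \<Rightarrow> nat \<Rightarrow> (nat \<Rightarrow> real) \<Rightarrow> real" where
  "mth_largest m n f = rev (sort (map f [0..<n])) ! (m - 1)"

definition Ent :: "nat \<Rightarrow> (nat \<Rightarrow> real) \<Rightarrow> real" where
  "Ent n a = - (\<Sum>i<n. (a i / (\<Sum>j<n. a j)) * ln (a i / (\<Sum>j<n. a j)))"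

definition wne_weight :: "real \<Rightarrow> nat \<Rightarrow> (nat \<Rightarrow> real) \<Rightarrow> nat \<Rightarrow> real" where
  "wne_weight \<delta> n sig2 i = \<delta> * sig2 i / (\<Sum>j<n. sig2 j)"

definition wne_pulls_real :: "real \<Rightarrow> real \<Rightarrow> nat \<Rightarrow> (nat \<Rightarrow> real) \<Rightarrow> nat \<Rightarrow> real" where
  "wne_pulls_real \<epsilon> \<delta> n sig2 i = 2 * sig2 i / (\<epsilon> / 2)\<^sup>2 * ln (1 / wne_weight \<delta> n sig2 i)"

definition wne_pulls :: "real \<Rightarrow> real \<Rightarrow> nat \<Rightarrow> (nat \<Rightarrow> real) \<Rightarrow> nat \<Rightarrow> nat" where
  "wne_pulls \<epsilon> \<delta> n sig2 i = nat \<lceil>wne_pulls_real \<epsilon> \<delta> n sig2 i\<rceil>"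

definition sample_mean :: "nat \<Rightarrow> (nat \<Rightarrow> 'a \<Rightarrow> real) \<Rightarrow> 'a \<Rightarrow> real" where
  "sample_mean N Xi \<omega> = (\<Sum>k<N. Xi k \<omega>) / real N"

end

theory Submission
  imports Defs
begin

(* Arm i is sampled N_i >= 8 sigma_i^2 / eps^2 * ln (1 / omega_i) times, so by the Chernoff bound
   for sums of independent sub-Gaussian variables its sample mean errs by eps/2 in the harmful
   direction (downwards for arms whose mean is at least the m-th largest mean v, upwards for the
   others) with probability at most omega_i; these probabilities sum to delta. Outside the union of
   these events, an arm with mean below v - eps has a smaller sample mean than each of the at least
   m arms with mean at least v, so it cannot be among the m empirically best arms.
   The sample count is the identity
   sum_i sigma_i^2 ln (S / (delta sigma_i^2)) = S (ln (1/delta) + Ent sigma^2), S = sum_i sigma_i^2. *)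

lemma (in prob_space) indep_sets_reindex:
  assumes inj: "inj_on f I" and ind: "indep_sets F (f ` I)"
  shows "indep_sets (\<lambda>i. F (f i)) I"
proof (rule indep_setsI)
  show "F (f i) \<subseteq> events" if "i \<in> I" for i
    using ind that unfolding indep_sets_def by blast
  fix A J assume J: "J \<noteq> {}" "J \<subseteq> I" "finite J" and A: "\<forall>j\<in>J. A j \<in> F (f j)"
  have injJ: "inj_on f J" using inj J(2) by (rule inj_on_subset)
  define B where "B y = A (the_inv_into J f y)" for y
  have B_f: "B (f j) = A j" if "j \<in> J" for j
    using the_inv_into_f_f[OF injJ that] by (simp add: B_def)
  have "prob (\<Inter>y\<in>f ` J. B y) = (\<Prod>y\<in>f ` J. prob (B y))"
    using J A by (intro indep_setsD[OF ind]) (auto simp: B_f)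
  then show "prob (\<Inter>j\<in>J. A j) = (\<Prod>j\<in>J. prob (A j))"
    by (simp add: prod.reindex[OF injJ] B_f)
qed

lemma (in prob_space) indep_vars_reindex:
  assumes "inj_on f I" and "indep_vars M' X (f ` I)"
  shows "indep_vars (\<lambda>i. M' (f i)) (\<lambda>i. X (f i)) I"
  using assms indep_sets_reindex[OF assms(1), where F="\<lambda>j. {X j -` A \<inter> space M | A. A \<in> sets (M' j)}"]
  unfolding indep_vars_def2 by auto

lemma (in prob_space) indep_vars_row:
  assumes "indep_vars (\<lambda>_. N') (\<lambda>(i, k). X i k) J" and "{i} \<times> K \<subseteq> J"
  shows "indep_vars (\<lambda>_. N') (X i) K"
proof -
  have "indep_vars (\<lambda>_. N') (\<lambda>(i, k). X i k) (Pair i ` K)"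
    using assms(2) by (intro indep_vars_subset[OF assms(1)]) auto
  moreover have "inj_on (Pair i) K" by (simp add: inj_on_def)
  ultimately show ?thesis
    using indep_vars_reindex by fastforce
qed

lemma (in prob_space) prob_space_diff_Union_ge:
  assumes "finite I" and "\<And>i. i \<in> I \<Longrightarrow> B i \<in> events"
    and "\<And>i. i \<in> I \<Longrightarrow> prob (B i) \<le> p i"
  shows "1 - (\<Sum>i\<in>I. p i) \<le> prob (space M - (\<Union>i\<in>I. B i))"
proof -
  have "prob (\<Union>i\<in>I. B i) \<le> (\<Sum>i\<in>I. prob (B i))"
    using assms(1,2) by (intro finite_measure_subadditive_finite) auto
  also have "\<dots> \<le> (\<Sum>i\<in>I. p i)"
    using assms(3) by (rule sum_mono)
  finally show ?thesis
    using assms(1,2) by (subst prob_compl) auto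
qed

lemma nn_integral_exp_le_of_subgaussian:
  assumes "X \<in> borel_measurable M" and "distr M borel X = D" and "subgaussian D mu s"
  shows "(\<integral>\<^sup>+x. ennreal (exp (l * (X x - mu))) \<partial>M) \<le> ennreal (exp (s * l\<^sup>2 / 2))"
proof -
  have mgf: "integrable D (\<lambda>y. exp (l * (y - mu)))" "ln (\<integral>y. exp (l * (y - mu)) \<partial>D) \<le> s * l\<^sup>2 / 2"
    using assms(3) unfolding subgaussian_def by auto
  have "(\<integral>\<^sup>+x. ennreal (exp (l * (X x - mu))) \<partial>M) = (\<integral>\<^sup>+y. ennreal (exp (l * (y - mu))) \<partial>D)"
    using assms(1,2) by (subst nn_integral_distr[symmetric]) auto
  also have "\<dots> = ennreal (\<integral>y. exp (l * (y - mu)) \<partial>D)"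
    using mgf(1) by (intro nn_integral_eq_integral) auto
  also have "\<dots> \<le> ennreal (exp (s * l\<^sup>2 / 2))"
  proof (rule ennreal_leI)
    define E where "E = (\<integral>y. exp (l * (y - mu)) \<partial>D)"
    show "E \<le> exp (s * l\<^sup>2 / 2)"
    proof (cases "E = 0")
      case False
      then have "E = exp (ln E)" by (simp add: E_def order_neq_le_trans)
      also have "\<dots> \<le> exp (s * l\<^sup>2 / 2)" using mgf(2) by (simp add: E_def)
      finally show ?thesis .
    qed simp
  qed
  finally show ?thesis .
qed

lemma (in prob_space) indep_sum_tail_le_exp:
  fixes Y :: "'i \<Rightarrow> 'a \<Rightarrow> real" and c :: "'i \<Rightarrow> real" and s t :: real
  assumes fin: "finite I" and ne: "I \<noteq> {}" and ind: "indep_vars (\<lambda>_. borel) Y I"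
    and mgf: "\<And>j l. j \<in> I \<Longrightarrow> (\<integral>\<^sup>+x. ennreal (exp (l * (Y j x - c j))) \<partial>M) \<le> ennreal (exp (s * l\<^sup>2 / 2))"
    and s: "s > 0" and t: "t > 0"
  shows "prob {x\<in>space M. t \<le> (\<Sum>j\<in>I. Y j x - c j)} \<le> exp (- t\<^sup>2 / (2 * card I * s))"
proof -
  define d where "d = card I * s"
  have d: "d > 0" using fin ne s by (simp add: d_def card_gt_0_iff)
  define l where "l = t / d" \<comment> \<open>the minimiser of \<open>d l\<^sup>2 / 2 - l t\<close>\<close>
  have l: "l > 0" using t d by (simp add: l_def)
  have [measurable]: "Y j \<in> borel_measurable M" if "j \<in> I" for j
    using ind that unfolding indep_vars_def by blast
  have "ennreal (prob {x\<in>space M. t \<le> (\<Sum>j\<in>I. Y j x - c j)})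
      \<le> ennreal (exp (- l * t)) * (\<integral>\<^sup>+x\<in>space M. exp (l * (\<Sum>j\<in>I. Y j x - c j)) \<partial>M)"
    unfolding emeasure_eq_measure[symmetric] by (intro Chernoff_ineq_nn_integral_ge l) auto
  also have "(\<integral>\<^sup>+x\<in>space M. exp (l * (\<Sum>j\<in>I. Y j x - c j)) \<partial>M)
      = (\<integral>\<^sup>+x. (\<Prod>j\<in>I. ennreal (exp (l * (Y j x - c j)))) \<partial>M)"
    by (intro nn_integral_cong) (simp add: sum_distrib_left exp_sum fin prod_ennreal)
  also have "\<dots> = (\<Prod>j\<in>I. \<integral>\<^sup>+x. ennreal (exp (l * (Y j x - c j))) \<partial>M)"
    by (intro indep_vars_nn_integral fin indep_vars_compose2[OF ind]) auto
  also have "\<dots> \<le> (\<Prod>j\<in>I. ennreal (exp (s * l\<^sup>2 / 2)))"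
    by (intro prod_mono_ennreal mgf)
  also have "(\<Prod>j\<in>I. ennreal (exp (s * l\<^sup>2 / 2))) = ennreal (exp (d * l\<^sup>2 / 2))"
    by (simp add: ennreal_power exp_of_nat_mult[symmetric] d_def mult.assoc)
  also have "ennreal (exp (- l * t)) * \<dots> = ennreal (exp (d * l\<^sup>2 / 2 - l * t))"
    by (simp add: ennreal_mult[symmetric] exp_add[symmetric])
  also have "d * l\<^sup>2 / 2 - l * t = - t\<^sup>2 / (2 * card I * s)"
    using d by (simp add: l_def d_def field_simps power2_eq_square)
  finally show ?thesis
    by (simp add: mult_left_mono ennreal_le_iff)
qed

lemma (in prob_space) sample_mean_ge_tail:
  fixes mu s e :: real
  assumes ind: "indep_vars (\<lambda>_. borel) Y {..<N}"
    and mgf: "\<And>k l. k < N \<Longrightarrow> (\<integral>\<^sup>+x. ennreal (exp (l * (Y k x - mu))) \<partial>M) \<le> ennreal (exp (s * l\<^sup>2 / 2))"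
    and s: "s > 0" and e: "e > 0"
  shows "prob {x\<in>space M. mu + e \<le> sample_mean N Y x} \<le> exp (- real N * e\<^sup>2 / (2 * s))"
proof (cases "N = 0")
  case True
  then show ?thesis by simp
next
  case False
  have "{x\<in>space M. mu + e \<le> sample_mean N Y x} = {x\<in>space M. N * e \<le> (\<Sum>k<N. Y k x - mu)}"
    using False by (auto simp: sample_mean_def sum_subtractf field_simps)
  also have "prob \<dots> \<le> exp (- (N * e)\<^sup>2 / (2 * card {..<N} * s))"
    using False e by (intro indep_sum_tail_le_exp ind mgf s) auto
  also have "\<dots> = exp (- real N * e\<^sup>2 / (2 * s))"
    using False s by (simp add: power2_eq_square)
  finally show ?thesis .
qed

lemma (in prob_space) sample_mean_le_tail:
  fixes mu s e :: real
  assumes ind: "indep_vars (\<lambda>_. borel) Y {..<N}"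
    and mgf: "\<And>k l. k < N \<Longrightarrow> (\<integral>\<^sup>+x. ennreal (exp (l * (Y k x - mu))) \<partial>M) \<le> ennreal (exp (s * l\<^sup>2 / 2))"
    and s: "s > 0" and e: "e > 0"
  shows "prob {x\<in>space M. sample_mean N Y x \<le> mu - e} \<le> exp (- real N * e\<^sup>2 / (2 * s))"
proof -
  have ind': "indep_vars (\<lambda>_. borel) (\<lambda>k x. - Y k x) {..<N}"
    by (rule indep_vars_compose2[OF ind]) auto
  have mgf': "(\<integral>\<^sup>+x. ennreal (exp (l * (- Y k x - - mu))) \<partial>M) \<le> ennreal (exp (s * l\<^sup>2 / 2))"
    if "k < N" for k l
    using mgf[OF that, of "- l"] by (simp add: algebra_simps)
  have "sample_mean N (\<lambda>k x. - Y k x) x = - sample_mean N Y x" for x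
    by (simp add: sample_mean_def sum_negf)
  then show ?thesis
    using sample_mean_ge_tail[OF ind' mgf' s e] by (simp add: algebra_simps)
qed

lemma mth_largest_card_ge:
  fixes \<mu> :: "nat \<Rightarrow> real"
  assumes "1 \<le> m" "m \<le> n"
  shows "m \<le> card {j. j < n \<and> mth_largest m n \<mu> \<le> \<mu> j}"
proof -
  define ys where "ys = sort (map \<mu> [0..<n])"
  define v where "v = mth_largest m n \<mu>"
  have ly: "length ys = n" by (simp add: ys_def)
  have sy: "sorted ys" by (simp add: ys_def)
  have v: "v = ys ! (n - m)"
    unfolding v_def mth_largest_def ys_def[symmetric] using assms ly
    by (simp add: rev_nth)
  have "card {j. j < n \<and> v \<le> \<mu> j} = card (set (filter (\<lambda>j. v \<le> \<mu> j) [0..<n]))"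
    by (rule arg_cong[where f=card]) auto
  also have "\<dots> = length (filter (\<lambda>j. v \<le> \<mu> j) [0..<n])"
    by (rule distinct_card) simp
  also have "\<dots> = length (filter (\<lambda>x. v \<le> x) (map \<mu> [0..<n]))"
    by (simp add: filter_map comp_def)
  also have "\<dots> = length (filter (\<lambda>x. v \<le> x) ys)"
    by (metis mset_filter mset_sort size_mset ys_def)
  also have "\<dots> = length (filter (\<lambda>x. v \<le> x) (take (n - m) ys)) + length (filter (\<lambda>x. v \<le> x) (drop (n - m) ys))"
    by (metis append_take_drop_id filter_append length_append)
  also have "filter (\<lambda>x. v \<le> x) (drop (n - m) ys) = drop (n - m) ys"
  proof (rule filter_True, rule ballI)
    fix x assume "x \<in> set (drop (n - m) ys)"
    then obtain k where "k < length (drop (n - m) ys)" "x = drop (n - m) ys ! k"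
      by (metis in_set_conv_nth)
    then have "x = ys ! (n - m + k)" "n - m + k < n" using ly by auto
    then show "v \<le> x" unfolding v using sorted_nth_mono[OF sy, of "n - m" "n - m + k"] ly by simp
  qed
  finally show ?thesis using ly assms unfolding v_def by simp
qed

(* Only these one-sided errors can spoil the selection, so each arm needs confidence omega_i
   rather than omega_i / 2. *)
definition harmful_deviation :: "real \<Rightarrow> real \<Rightarrow> real \<Rightarrow> real \<Rightarrow> bool" where
  "harmful_deviation v \<epsilon> mu x \<longleftrightarrow> (if v \<le> mu then x \<le> mu - \<epsilon> / 2 else mu + \<epsilon> / 2 \<le> x)"

lemma top_m_selection_near_threshold:
  fixes \<mu> est :: "nat \<Rightarrow> real"
  assumes many: "m \<le> card {j. j < n \<and> v \<le> \<mu> j}" and \<epsilon>: "0 \<le> \<epsilon>"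
    and S: "S \<subseteq> {..<n}" "card S = m"
    and sel: "\<forall>i\<in>S. \<forall>j\<in>{..<n} - S. est j \<le> est i"
    and good: "\<And>j. j < n \<Longrightarrow> \<not> harmful_deviation v \<epsilon> (\<mu> j) (est j)"
    and i: "i \<in> S"
  shows "v - \<epsilon> \<le> \<mu> i"
proof (rule ccontr)
  assume bad: "\<not> v - \<epsilon> \<le> \<mu> i"
  define G where "G = {j. j < n \<and> v \<le> \<mu> j}"
  have finS: "finite S" using S(1) finite_subset by blast
  have "m > 0" using S(2) i finS by (metis card_gt_0_iff empty_iff)
  have "\<not> G \<subseteq> S - {i}"
  proof
    assume "G \<subseteq> S - {i}"
    then have "card G \<le> card (S - {i})" using finS by (intro card_mono) auto
    also have "\<dots> < m" using S(2) i finS \<open>m > 0\<close> by simp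
    finally show False using many unfolding G_def by simp
  qed
  moreover have "i \<notin> G" using bad \<epsilon> unfolding G_def by auto
  ultimately obtain j where j: "j < n" "v \<le> \<mu> j" "j \<notin> S" unfolding G_def by auto
  have "\<mu> j - \<epsilon> / 2 < est j"
    using good[OF j(1)] j(2) by (simp add: harmful_deviation_def)
  also have "est j \<le> est i" using sel i j by blast
  also have "est i < \<mu> i + \<epsilon> / 2"
    using good[of i] S(1) i bad \<epsilon> by (auto simp: harmful_deviation_def)
  finally show False using j(2) bad by linarith
qed

lemma sum_wne_pulls_real:
  fixes \<epsilon> \<delta> :: real and sig2 :: "nat \<Rightarrow> real"
  assumes eps: "\<epsilon> > 0" and delta: "\<delta> > 0" and n: "n > 0"
    and sig_pos: "\<forall>i<n. sig2 i > 0"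
  shows "(\<Sum>i<n. wne_pulls_real \<epsilon> \<delta> n sig2 i)
           = 8 * (\<Sum>i<n. sig2 i / \<epsilon>\<^sup>2) * (ln (1 / \<delta>) + Ent n sig2)"
proof -
  define S where "S = (\<Sum>j<n. sig2 j)"
  define T where "T = (\<Sum>i<n. sig2 i * ln (sig2 i))"
  have S: "S > 0" unfolding S_def using n sig_pos
    by (intro sum_pos) (auto simp: lessThan_empty_iff)
  have "(\<Sum>i<n. wne_pulls_real \<epsilon> \<delta> n sig2 i)
      = (\<Sum>i<n. 8 / \<epsilon>\<^sup>2 * (sig2 i * (ln S - ln \<delta>) - sig2 i * ln (sig2 i)))"
  proof (rule sum.cong)
    fix i assume "i \<in> {..<n}"
    then have si: "sig2 i > 0" using sig_pos by auto
    have "ln (1 / wne_weight \<delta> n sig2 i) = ln S - ln \<delta> - ln (sig2 i)"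
      unfolding wne_weight_def S_def[symmetric] using si S delta
      by (simp add: ln_div ln_mult)
    then show "wne_pulls_real \<epsilon> \<delta> n sig2 i = 8 / \<epsilon>\<^sup>2 * (sig2 i * (ln S - ln \<delta>) - sig2 i * ln (sig2 i))"
      unfolding wne_pulls_real_def using eps by (simp only:) (simp add: field_simps power2_eq_square)
  qed simp
  also have "\<dots> = 8 / \<epsilon>\<^sup>2 * (S * (ln S - ln \<delta>) - T)"
    by (simp only: S_def T_def sum_distrib_left[symmetric] sum_subtractf sum_distrib_right[symmetric])
  finally have pulls: "(\<Sum>i<n. wne_pulls_real \<epsilon> \<delta> n sig2 i) = 8 / \<epsilon>\<^sup>2 * (S * (ln S - ln \<delta>) - T)" .
  have "Ent n sig2 = - (\<Sum>i<n. (sig2 i * ln (sig2 i) - sig2 i * ln S) / S)"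
    unfolding Ent_def S_def[symmetric]
  proof (intro arg_cong[where f=uminus] sum.cong refl)
    fix i assume "i \<in> {..<n}"
    then have "sig2 i > 0" using sig_pos by auto
    then show "sig2 i / S * ln (sig2 i / S) = (sig2 i * ln (sig2 i) - sig2 i * ln S) / S"
      using S by (simp add: ln_div field_simps)
  qed
  also have "\<dots> = - (T - S * ln S) / S"
    by (simp only: T_def S_def sum_divide_distrib[symmetric] sum_subtractf sum_distrib_right[symmetric])
  finally have ent: "Ent n sig2 = - (T - S * ln S) / S" .
  have "(\<Sum>i<n. sig2 i / \<epsilon>\<^sup>2) = S / \<epsilon>\<^sup>2" by (simp add: S_def sum_divide_distrib)
  then show ?thesis unfolding pulls ent using S eps delta
    by (simp add: ln_div field_simps)
qed

lemma wne_weight_pos: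
  assumes "\<delta> > 0" and "\<forall>j<n. sig2 j > 0" and "i < n"
  shows "wne_weight \<delta> n sig2 i > 0"
proof -
  have "(\<Sum>j<n. sig2 j) > 0" using assms by (intro sum_pos) auto
  then show ?thesis using assms by (simp add: wne_weight_def)
qed

lemma sum_wne_weight:
  assumes "(\<Sum>j<n. sig2 j) \<noteq> 0"
  shows "(\<Sum>i<n. wne_weight \<delta> n sig2 i) = \<delta>"
  using assms by (simp add: wne_weight_def sum_divide_distrib[symmetric] sum_distrib_left[symmetric])

lemma exp_wne_pulls_le_wne_weight:
  fixes \<epsilon> :: real
  assumes eps: "\<epsilon> > 0" and sig: "sig2 i > 0" and w: "wne_weight \<delta> n sig2 i > 0"
  shows "exp (- real (wne_pulls \<epsilon> \<delta> n sig2 i) * (\<epsilon> / 2)\<^sup>2 / (2 * sig2 i)) \<le> wne_weight \<delta> n sig2 i"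
proof -
  have "ln (1 / wne_weight \<delta> n sig2 i) = wne_pulls_real \<epsilon> \<delta> n sig2 i * (\<epsilon> / 2)\<^sup>2 / (2 * sig2 i)"
    using eps sig by (simp add: wne_pulls_real_def field_simps)
  also have "\<dots> \<le> real (wne_pulls \<epsilon> \<delta> n sig2 i) * (\<epsilon> / 2)\<^sup>2 / (2 * sig2 i)"
    using sig by (intro divide_right_mono mult_right_mono) (auto simp: wne_pulls_def real_nat_ceiling_ge)
  finally have "- real (wne_pulls \<epsilon> \<delta> n sig2 i) * (\<epsilon> / 2)\<^sup>2 / (2 * sig2 i) \<le> ln (wne_weight \<delta> n sig2 i)"
    using w by (simp add: ln_div)
  then show ?thesis
    using w by (metis exp_le_cancel_iff exp_ln)
qed

lemma (in prob_space) prob_harmful_deviation_le_wne_weight: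
  fixes \<epsilon> \<delta> :: real and n i :: nat and sig2 :: "nat \<Rightarrow> real" and Y :: "nat \<Rightarrow> 'a \<Rightarrow> real"
  defines "N \<equiv> wne_pulls \<epsilon> \<delta> n sig2 i"
  assumes eps: "\<epsilon> > 0" and sig: "sig2 i > 0" and w: "wne_weight \<delta> n sig2 i > 0"
    and ind: "indep_vars (\<lambda>_. borel) Y {..<N}"
    and distr: "\<And>k. k < N \<Longrightarrow> distr M borel (Y k) = D" and sg: "subgaussian D mu (sig2 i)"
  shows "prob {x\<in>space M. harmful_deviation v \<epsilon> mu (sample_mean N Y x)} \<le> wne_weight \<delta> n sig2 i"
proof -
  have mgf: "(\<integral>\<^sup>+x. ennreal (exp (l * (Y k x - mu))) \<partial>M) \<le> ennreal (exp (sig2 i * l\<^sup>2 / 2))"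
    if "k < N" for k l
    using ind that distr sg unfolding indep_vars_def
    by (intro nn_integral_exp_le_of_subgaussian) auto
  have e: "\<epsilon> / 2 > 0" using eps by simp
  note exp_le = exp_wne_pulls_le_wne_weight[OF eps sig w, folded N_def]
  have "prob {x\<in>space M. sample_mean N Y x \<le> mu - \<epsilon> / 2} \<le> wne_weight \<delta> n sig2 i"
    "prob {x\<in>space M. mu + \<epsilon> / 2 \<le> sample_mean N Y x} \<le> wne_weight \<delta> n sig2 i"
    using sample_mean_le_tail[OF ind mgf sig e] sample_mean_ge_tail[OF ind mgf sig e] exp_le
    by linarith+
  then show ?thesis by (cases "v \<le> mu") (simp_all add: harmful_deviation_def)
qed

theorem lemma2:
  fixes \<epsilon> \<delta> :: real and m n :: nat
    and sig2 \<mu> :: "nat \<Rightarrow> real"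
    and D :: "nat \<Rightarrow> real measure"
    and M :: "'a measure"
    and X :: "nat \<Rightarrow> nat \<Rightarrow> 'a \<Rightarrow> real"
  assumes eps: "\<epsilon> > 0"
    and delta: "0 < \<delta>" "\<delta> < 1"
    and mn: "1 \<le> m" "m \<le> n"
    and sig_pos: "\<forall>i<n. sig2 i > 0"
    and M: "prob_space M"
    and arms: "\<forall>i<n. prob_space (D i) \<and> sets (D i) = sets borel \<and>
                 integrable (D i) (\<lambda>x. x) \<and> (\<integral>x. x \<partial>D i) = \<mu> i \<and>
                 subgaussian (D i) (\<mu> i) (sig2 i)"
    and meas: "\<forall>i<n. \<forall>k<wne_pulls \<epsilon> \<delta> n sig2 i. X i k \<in> borel_measurable M"
    and distr: "\<forall>i<n. \<forall>k<wne_pulls \<epsilon> \<delta> n sig2 i. distr M borel (X i k) = D i"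
    and indep: "prob_space.indep_vars M (\<lambda>_. borel) (\<lambda>(i, k). X i k)
                  {(i, k). i < n \<and> k < wne_pulls \<epsilon> \<delta> n sig2 i}"
  shows "(\<Sum>i<n. wne_pulls_real \<epsilon> \<delta> n sig2 i)
           = 8 * (\<Sum>i<n. sig2 i / \<epsilon>\<^sup>2) * (ln (1 / \<delta>) + Ent n sig2)
         \<and> (\<exists>A\<in>sets M. measure M A \<ge> 1 - \<delta> \<and>
           (\<forall>\<omega>\<in>A. \<forall>S. S \<subseteq> {..<n} \<and> card S = m \<and>
              (\<forall>i\<in>S. \<forall>j\<in>{..<n} - S.
                 sample_mean (wne_pulls \<epsilon> \<delta> n sig2 j) (X j) \<omega>
                   \<le> sample_mean (wne_pulls \<epsilon> \<delta> n sig2 i) (X i) \<omega>)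
              \<longrightarrow> (\<forall>i\<in>S. \<mu> i \<ge> mth_largest m n \<mu> - \<epsilon>)))"
proof -
  interpret prob_space M by (rule M)
  define N where "N i = wne_pulls \<epsilon> \<delta> n sig2 i" for i
  define v where "v = mth_largest m n \<mu>"
  define B where "B i = {x\<in>space M. harmful_deviation v \<epsilon> (\<mu> i) (sample_mean (N i) (X i) x)}" for i
  have B_events: "B i \<in> events" if "i < n" for i
  proof -
    have [measurable]: "(\<lambda>x. sample_mean (N i) (X i) x) \<in> borel_measurable M"
      using meas that unfolding sample_mean_def N_def
      by (intro borel_measurable_divide borel_measurable_sum) auto
    show ?thesis unfolding B_def harmful_deviation_def by measurable
  qed
  have B_prob: "prob (B i) \<le> wne_weight \<delta> n sig2 i" if i: "i < n" for i
  proof -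
    have "indep_vars (\<lambda>_. borel) (X i) {..<N i}"
      using i by (intro indep_vars_row[OF indep]) (auto simp: N_def)
    then show ?thesis
      unfolding B_def N_def using i arms distr sig_pos
      by (intro prob_harmful_deviation_le_wne_weight[where D = "D i"] eps
          wne_weight_pos[OF delta(1) sig_pos i]) auto
  qed
  have n: "0 < n" using mn by simp
  then have "(\<Sum>j<n. sig2 j) > 0" using sig_pos by (intro sum_pos) auto
  then have "(\<Sum>i<n. wne_weight \<delta> n sig2 i) = \<delta>" by (intro sum_wne_weight) simp
  then have "1 - \<delta> \<le> prob (space M - (\<Union>i<n. B i))"
    using prob_space_diff_Union_ge[of "{..<n}" B "wne_weight \<delta> n sig2"] B_events B_prob by simp
  moreover have "space M - (\<Union>i<n. B i) \<in> events" using B_events by auto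
  moreover have "v - \<epsilon> \<le> \<mu> i"
    if \<omega>: "\<omega> \<in> space M - (\<Union>i<n. B i)" and S: "S \<subseteq> {..<n}" "card S = m"
      and sel: "\<forall>i\<in>S. \<forall>j\<in>{..<n} - S. sample_mean (N j) (X j) \<omega> \<le> sample_mean (N i) (X i) \<omega>"
      and i: "i \<in> S" for \<omega> S i
  proof (rule top_m_selection_near_threshold[OF _ _ S sel _ i])
    show "m \<le> card {j. j < n \<and> v \<le> \<mu> j}"
      unfolding v_def by (rule mth_largest_card_ge[OF mn])
    show "0 \<le> \<epsilon>" using eps by simp
    show "\<not> harmful_deviation v \<epsilon> (\<mu> j) (sample_mean (N j) (X j) \<omega>)" if "j < n" for j
      using \<omega> that by (auto simp: B_def)
  qed
  ultimately show ?thesis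
    using sum_wne_pulls_real[OF eps delta(1) n sig_pos] unfolding N_def v_def by blast
qed

end
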